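(* Let $(G,L,v)$ be a reachable triple, $i\in[4]$ a color, and $D$ a nonnegative integer. Then $0\le P(G,L,v,i,D)\le \tfrac12$.
   Context: Colors are $[4]=\{1,2,3,4\}$. A list-coloring instance $(G,L)$ is a finite simple graph $G=(V,E)$ with $L:V\to 2^{[4]}$. For a vertex $v$, $G_v$ is $G$ with $v$ and its incident edges removed, and $G_{v,w}=(G_v)_w$. If $v$ has neighbors $v_1,\dots,v_d$ (in a fixed order), then for $k\in[d]$ and a color $j$, $L_{k,j}$ is the list assignment on $G_v$ with $L_{k,j}(v_\ell)=L(v_\ell)\setminus\{j\}$ for $\ell<k$ and $L_{k,j}(u)=L(u)$ for all other vertices $u$ (so $L_{1,j}=L$). A triple $(G,L,v)$ with $v\in V$ is reachable if $\deg_G(u)\le3$ and $|L(u)|\ge\deg_G(u)+1$ for every $u\in V$, and moreover $\deg_G(v)\le2$ and $|L(v)|\ge\deg_G(v)+2$. The procedure $P(G,L,v,i,D)$ ($i\in[4]$, $D$ an integer) is defined recursively (empty products equal $1$): (a) If $i\notin L(v)$, return $0$. Otherwise, if $D\le 0$ or $\deg_G(v)=0$, return $1/|L(v)|$. (b) If $\deg_G(v)=1$ with neighbor $v_1$: let $x=P(G_v,L,v_1,i,D-1)$. If $|L(v)|=2$, say $L(v)=\{i,j\}$, let $y=P(G_v,L,v_1,j,D-1)$ and return $\frac{1-x}{2-x-y}$. If $|L(v)|=4$, return $\frac{1-x}{3}$. If $|L(v)|=3$, let $j$ be the unique color in $[4]\setminus L(v)$, $y=P(G_v,L,v_1,j,D-1)$,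 and return $\frac{1-x}{2+y}$. (c) If $\deg_G(v)=2$: order its neighbors $v_1,v_2$ so that $\deg_G(v_1)\ge\deg_G(v_2)$ and, if $\deg_G(v_1)=\deg_G(v_2)=1$, so that $i\notin L(v_1)$ implies $i\notin L(v_2)$. Let $u_1,\dots,u_{d_1}$ be the neighbors of $v_1$ in $G_v$ (fixed order) and for $k\in[d_1]$, $w\in[4]$ let $L'_{k,w}$ be the list assignment on $G_{v,v_1}$ with $L'_{k,w}(u_\ell)=L(u_\ell)\setminus\{w\}$ for $\ell<k$ and $L'_{k,w}(u)=L(u)$ otherwise. Set $x_{k,w}=P(G_{v,v_1},L'_{k,w},u_k,w,D-1)$ for $k\in[d_1]$, $w\in L(v_1)$. For $j\in L(v)$ set $f_j=0$ if $j\notin L(v_1)$ and otherwise $f_j=\frac{\prod_{k=1}^{d_1}(1-x_{k,j})}{\sum_{w\in L(v_1)}\prod_{k=1}^{d_1}(1-x_{k,w})}$, and set $y_j=P(G_v,L_{2,j},v_2,j,D-1)$. Return $\frac{(1-f_i)(1-y_i)}{\sum_{j\in L(v)}(1-f_j)(1-y_j)}$. (d) If $\deg_G(v)=3$ with neighbors $v_1,v_2,v_3$: for $j\in L(v)$ let $x_j=P(G_v,L_{1,j},v_1,j,D-1)$, $y_j=P(G_v,L_{2,j},v_2,j,D-1)$, $z_j=P(G_v,L_{3,j},v_3,j,D-1)$, and return $\frac{(1-x_i)(1-y_i)(1-z_i)}{\sum_{j\in L(v)}(1-x_j)(1-y_j)(1-z_j)}$. For reachable triples, all recursive calls are again on reachable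 triples and case (d) never occurs. *)

theory Defs
  imports Main "HOL.Real"
begin

type_synonym 'a graph = "'a set \<times> ('a \<times> 'a) set"

definition verts :: "'a graph \<Rightarrow> 'a set" where "verts G = fst G"
definition edges :: "'a graph \<Rightarrow> ('a \<times> 'a) set" where "edges G = snd G"

definition simple_graph :: "'a graph \<Rightarrow> bool" where
  "simple_graph G \<longleftrightarrow> finite (verts G) \<and> edges G \<subseteq> verts G \<times> verts G
     \<and> (\<forall>a b. (a, b) \<in> edges G \<longrightarrow> (b, a) \<in> edges G)
     \<and> (\<forall>a. (a, a) \<notin> edges G)"

definition nbrs :: "'a graph \<Rightarrow> 'a \<Rightarrow> 'a set" where
  "nbrs G v = {u. (v, u) \<in> edges G}"

definition deg :: "'a graph \<Rightarrow> 'a \<Rightarrow> nat" where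
  "deg G v = card (nbrs G v)"

definition del :: "'a graph \<Rightarrow> 'a \<Rightarrow> 'a graph" where
  "del G v = (verts G - {v}, {e \<in> edges G. fst e \<noteq> v \<and> snd e \<noteq> v})"

text \<open>Colours are 1,2,3,4. A list assignment is a function from vertices to sets of colours.\<close>
definition colors :: "nat set" where "colors = {1, 2, 3, 4}"

text \<open>Neighbour-ordering: for each (finite simple graph, list assignment, vertex, colour)
  an arbitrary but fixed enumeration of the neighbours of the vertex without repetitions.
  The theorem is quantified over all such orderings.\<close>
definition valid_order :: "('a graph \<Rightarrow> ('a \<Rightarrow> nat set) \<Rightarrow> 'a \<Rightarrow> nat \<Rightarrow> 'a list) \<Rightarrow> bool" where
  "valid_order nbo \<longleftrightarrow> (\<forall>G L v i. simple_graph G \<and> v \<in> verts G \<longrightarrow>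
      distinct (nbo G L v i) \<and> set (nbo G L v i) = nbrs G v)"

text \<open>L_{k,j} for a neighbour list N (0-indexed k: the first k neighbours lose colour j).\<close>
definition remc :: "('a \<Rightarrow> nat set) \<Rightarrow> 'a list \<Rightarrow> nat \<Rightarrow> nat \<Rightarrow> 'a \<Rightarrow> nat set" where
  "remc L N k j = (\<lambda>u. if u \<in> set (take k N) then L u - {j} else L u)"

definition reachable :: "'a graph \<Rightarrow> ('a \<Rightarrow> nat set) \<Rightarrow> 'a \<Rightarrow> bool" where
  "reachable G L v \<longleftrightarrow> simple_graph G \<and> v \<in> verts G
     \<and> (\<forall>u \<in> verts G. L u \<subseteq> colors \<and> deg G u \<le> 3 \<and> card (L u) \<ge> deg G u + 1)
     \<and> deg G v \<le> 2 \<and> card (L v) \<ge> deg G v + 2"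

text \<open>The procedure P(G,L,v,i,D), with D :: nat (the case D \<le> 0 is D = 0).
  Inputs not covered by the paper's cases (never reached from reachable triples) return 0.\<close>
primrec P :: "nat \<Rightarrow> ('a graph \<Rightarrow> ('a \<Rightarrow> nat set) \<Rightarrow> 'a \<Rightarrow> nat \<Rightarrow> 'a list)
                 \<Rightarrow> 'a graph \<Rightarrow> ('a \<Rightarrow> nat set) \<Rightarrow> 'a \<Rightarrow> nat \<Rightarrow> real" where
  "P 0 nbo G L v i = (if i \<notin> L v then 0 else 1 / real (card (L v)))"
| "P (Suc D) nbo G L v i =
    (if i \<notin> L v then 0
     else if deg G v = 0 then 1 / real (card (L v))
     else if deg G v = 1 then
       (let N = nbo G L v i; v1 = N ! 0; G' = del G v;
            x = P D nbo G' L v1 i in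
        if card (L v) = 2 then
          (let j = the_elem (L v - {i}); y = P D nbo G' L v1 j in (1 - x) / (2 - x - y))
        else if card (L v) = 4 then (1 - x) / 3
        else if card (L v) = 3 then
          (let j = the_elem (colors - L v); y = P D nbo G' L v1 j in (1 - x) / (2 + y))
        else 0)
     else if deg G v = 2 then
       (let N = nbo G L v i; a = N ! 0; b = N ! 1;
            ok = (deg G a \<ge> deg G b \<and>
                  (deg G a = 1 \<and> deg G b = 1 \<longrightarrow> (i \<notin> L a \<longrightarrow> i \<notin> L b)));
            v1 = (if ok then a else b); v2 = (if ok then b else a);
            G' = del G v; G'' = del G' v1;
            U = nbo G' L v1 i; d1 = length U;
            x = (\<lambda>k w. P D nbo G'' (remc L U k w) (U ! k) w);
            pr = (\<lambda>w. \<Prod>k<d1. (1 - x k w));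
            f = (\<lambda>j. if j \<notin> L v1 then 0 else pr j / (\<Sum>w\<in>L v1. pr w));
            y = (\<lambda>j. P D nbo G' (remc L [v1, v2] 1 j) v2 j)
        in (1 - f i) * (1 - y i) / (\<Sum>j\<in>L v. (1 - f j) * (1 - y j)))
     else if deg G v = 3 then
       (let N = nbo G L v i; G' = del G v;
            t = (\<lambda>j. \<Prod>k<3. (1 - P D nbo G' (remc L N k j) (N ! k) j))
        in t i / (\<Sum>j\<in>L v. t j))
     else 0)"

end

theory Submission
  imports Defs
begin

text \<open>Every recursive call of \<open>P\<close> deletes the root \<open>v\<close> (or its
  neighbour \<open>v\<^sub>1\<close>) and removes at most one colour from the lists of some neighbours of the
  deleted vertex; this keeps \<open>|L(u)| \<ge> deg(u) + 1\<close> everywhere, and the new root, a former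
  neighbour with untouched list, gains the extra slack \<open>|L| \<ge> deg + 2\<close>. So all recursive
  values lie in \<open>[0, 1/2]\<close>. At a root of degree 1 the list has at least three colours and the
  bound is direct. At a root of degree 2 the list is all four colours, the \<open>f\<^sub>j\<close> are
  probabilities summing to at most 1 and \<open>y\<^sub>j \<le> 1/2\<close>, so the three colours \<open>j \<noteq> i\<close> contribute
  at least \<open>(3 - 1)/2 = 1\<close> to the normalising sum, while the numerator is at most 1.\<close>

lemma verts_del [simp]: "verts (del G v) = verts G - {v}"
  unfolding del_def verts_def by simp

lemma nbrs_del: "u \<noteq> v \<Longrightarrow> nbrs (del G v) u = nbrs G u - {v}"
  unfolding nbrs_def del_def edges_def by auto

lemma simple_graph_del: "simple_graph G \<Longrightarrow> simple_graph (del G v)"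
  unfolding simple_graph_def del_def verts_def edges_def by auto

lemma nbrs_sym: "simple_graph G \<Longrightarrow> u \<in> nbrs G v \<longleftrightarrow> v \<in> nbrs G u"
  unfolding simple_graph_def nbrs_def by auto

lemma nbrs_subset_verts: "simple_graph G \<Longrightarrow> nbrs G v \<subseteq> verts G - {v}"
  unfolding simple_graph_def nbrs_def by auto

lemma finite_nbrs: "simple_graph G \<Longrightarrow> finite (nbrs G u)"
  using nbrs_subset_verts[of G u] unfolding simple_graph_def by (meson finite_Diff finite_subset)

lemma deg_pos: "simple_graph G \<Longrightarrow> v \<in> nbrs G u \<Longrightarrow> 0 < deg G u"
  unfolding deg_def using finite_nbrs by (metis card_gt_0_iff empty_iff)

lemma deg_del:
  "simple_graph G \<Longrightarrow> u \<noteq> v \<Longrightarrow> deg (del G v) u = (if v \<in> nbrs G u then deg G u - 1 else deg G u)"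
  unfolding deg_def using nbrs_del[of u v G] finite_nbrs[of G u] by (auto simp: card_Diff_singleton)

lemma card_colors: "card colors = 4"
  unfolding colors_def by simp

lemma remc_0 [simp]: "remc L N 0 j = L"
  unfolding remc_def by simp

text \<open>The invariant of the recursion: reachability without the conditions on the root.\<close>
definition admissible :: "'a graph \<Rightarrow> ('a \<Rightarrow> nat set) \<Rightarrow> bool" where
  "admissible G L \<longleftrightarrow> simple_graph G
     \<and> (\<forall>u \<in> verts G. L u \<subseteq> colors \<and> deg G u \<le> 3 \<and> deg G u + 1 \<le> card (L u))"

lemma reachable_imp_admissible: "reachable G L v \<Longrightarrow> admissible G L"
  unfolding reachable_def admissible_def by auto

lemma reachable_card_le_4: "reachable G L u \<Longrightarrow> card (L u) \<le> 4"
  unfolding reachable_def using card_mono[of colors "L u"] card_colors by (simp add: colors_def)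

lemma admissible_del_remc:
  assumes adm: "admissible G L" and N: "set (take k N) \<subseteq> nbrs G v"
  shows "admissible (del G v) (remc L N k j)"
  unfolding admissible_def
proof (intro conjI ballI)
  have s: "simple_graph G" using adm unfolding admissible_def by blast
  then show "simple_graph (del G v)" by (rule simple_graph_del)
  fix u assume "u \<in> verts (del G v)"
  then have u: "u \<in> verts G" "u \<noteq> v" by auto
  have Lu: "L u \<subseteq> colors" "deg G u \<le> 3" "deg G u + 1 \<le> card (L u)"
    using adm u unfolding admissible_def by auto
  have fin: "finite (L u)" using Lu(1) unfolding colors_def by (rule finite_subset) simp
  show "remc L N k j u \<subseteq> colors" "deg (del G v) u \<le> 3"
    using Lu deg_del[OF s u(2)] unfolding remc_def by auto
  show "deg (del G v) u + 1 \<le> card (remc L N k j u)"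
  proof (cases "u \<in> set (take k N)")
    case True
    then have "v \<in> nbrs G u" using N nbrs_sym[OF s] by blast
    then have "deg (del G v) u = deg G u - 1" "0 < deg G u"
      using deg_del[OF s u(2)] deg_pos[OF s] by auto
    moreover have "card (L u) - 1 \<le> card (L u - {j})"
      using diff_card_le_card_Diff[of "{j}"] by simp
    moreover have "remc L N k j u = L u - {j}" using True unfolding remc_def by simp
    ultimately show ?thesis using Lu(3) by simp
  next
    case False
    then have "remc L N k j u = L u" unfolding remc_def by simp
    moreover have "deg (del G v) u \<le> deg G u" using deg_del[OF s u(2)] by simp
    ultimately show ?thesis using Lu(3) by simp
  qed
qed

lemma admissible_del: "admissible G L \<Longrightarrow> admissible (del G v) L"
  using admissible_del_remc[of G L 0 "[]" v 0] by simp

lemma reachable_del_remc: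
  assumes adm: "admissible G L" and N: "distinct N" "set N \<subseteq> nbrs G v" and k: "k < length N"
  shows "reachable (del G v) (remc L N k j) (N ! k)"
proof -
  have s: "simple_graph G" using adm unfolding admissible_def by blast
  let ?w = "N ! k"
  have w: "?w \<in> nbrs G v" using N(2) nth_mem[OF k] by (rule subsetD)
  then have wv: "?w \<in> verts G" "?w \<noteq> v" "v \<in> nbrs G ?w"
    using nbrs_subset_verts[OF s] nbrs_sym[OF s] by auto
  have "distinct (take k N @ ?w # drop (Suc k) N)"
    using N(1) by (subst (asm) id_take_nth_drop[OF k])
  then have "?w \<notin> set (take k N)" by simp
  then have "remc L N k j ?w = L ?w" unfolding remc_def by simp
  moreover have "deg G ?w \<le> 3" "deg G ?w + 1 \<le> card (L ?w)"
    using adm wv unfolding admissible_def by auto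
  moreover have "deg (del G v) ?w = deg G ?w - 1" "0 < deg G ?w"
    using deg_del[OF s wv(2)] deg_pos[OF s wv(3)] wv(3) by auto
  ultimately have "deg (del G v) ?w \<le> 2" "deg (del G v) ?w + 2 \<le> card (remc L N k j ?w)"
    by simp_all
  moreover have "set (take k N) \<subseteq> nbrs G v" using set_take_subset N(2) by (rule order_trans)
  then have "admissible (del G v) (remc L N k j)" by (rule admissible_del_remc[OF adm])
  ultimately show ?thesis
    using wv unfolding reachable_def admissible_def by simp
qed

lemma normalized_weight_bounds:
  fixes p :: "'b \<Rightarrow> real"
  assumes "finite A" "\<And>w. w \<in> A \<Longrightarrow> 0 \<le> p w"
  shows "0 \<le> (if j \<notin> A then 0 else p j / (\<Sum>w\<in>A. p w))"
    and "(if j \<notin> A then 0 else p j / (\<Sum>w\<in>A. p w)) \<le> 1"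
proof -
  have "j \<in> A \<Longrightarrow> p j \<le> (\<Sum>w\<in>A. p w)" using assms by (intro member_le_sum) auto
  moreover have "0 \<le> (\<Sum>w\<in>A. p w)" using assms(2) by (rule sum_nonneg)
  ultimately show "0 \<le> (if j \<notin> A then 0 else p j / (\<Sum>w\<in>A. p w))"
    and "(if j \<notin> A then 0 else p j / (\<Sum>w\<in>A. p w)) \<le> 1"
    using assms(2)[of j] by (auto simp: divide_le_eq_1)
qed

lemma sum_normalized_weights_le_1:
  fixes p :: "'b \<Rightarrow> real"
  assumes "finite S" "A \<subseteq> S"
  shows "(\<Sum>j\<in>S. if j \<notin> A then 0 else p j / (\<Sum>w\<in>A. p w)) \<le> 1"
proof -
  have "(\<Sum>j\<in>S. if j \<notin> A then 0 else p j / (\<Sum>w\<in>A. p w))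
      = (\<Sum>j\<in>A. if j \<notin> A then 0 else p j / (\<Sum>w\<in>A. p w))"
    using assms by (intro sum.mono_neutral_right) auto
  also have "\<dots> = (\<Sum>j\<in>A. p j / (\<Sum>w\<in>A. p w))" by simp
  also have "\<dots> = (\<Sum>j\<in>A. p j) / (\<Sum>w\<in>A. p w)"
    by (simp add: sum_divide_distrib[symmetric])
  also have "\<dots> \<le> 1" by (simp add: divide_le_eq_1)
  finally show ?thesis .
qed

text \<open>The colours \<open>j \<noteq> i\<close> have total weight \<open>\<Sum> (1 - f j)(1 - y j) \<ge> \<Sum> (1 - f j)/2 \<ge> (3 - 1)/2\<close>.\<close>
lemma weighted_ratio_le_half:
  fixes f y :: "'b \<Rightarrow> real"
  assumes S: "finite S" "4 \<le> card S" "i \<in> S"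
    and f: "\<And>j. j \<in> S \<Longrightarrow> 0 \<le> f j \<and> f j \<le> 1" and sum_f: "sum f S \<le> 1"
    and y: "\<And>j. j \<in> S \<Longrightarrow> 0 \<le> y j \<and> y j \<le> 1/2"
  shows "(1 - f i) * (1 - y i) / (\<Sum>j\<in>S. (1 - f j) * (1 - y j)) \<in> {0..1/2}"
proof -
  define t where "t j = (1 - f j) * (1 - y j)" for j
  have t_nonneg: "0 \<le> t j" if "j \<in> S" for j using f[OF that] y[OF that] unfolding t_def by simp
  have t_i: "t i \<le> 1" using f[OF S(3)] y[OF S(3)] unfolding t_def by (simp add: mult_le_one)
  have "(1 - f j) / 2 \<le> t j" if "j \<in> S" for j
    using mult_left_mono[of "1/2" "1 - y j" "1 - f j"] f[OF that] y[OF that] unfolding t_def by simp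
  then have "(\<Sum>j\<in>S-{i}. (1 - f j) / 2) \<le> (\<Sum>j\<in>S-{i}. t j)"
    by (intro sum_mono) simp
  moreover have "(\<Sum>j\<in>S-{i}. (1 - f j) / 2) = (real (card S - 1) - (sum f S - f i)) / 2"
    using S by (simp add: sum_divide_distrib[symmetric] sum_subtractf sum_diff1)
  moreover have "2 \<le> real (card S - 1) - (sum f S - f i)"
    using S(2) sum_f f[OF S(3)] by linarith
  ultimately have rest: "1 \<le> (\<Sum>j\<in>S-{i}. t j)" by simp
  have split: "(\<Sum>j\<in>S. t j) = t i + (\<Sum>j\<in>S-{i}. t j)"
    using S by (simp add: sum.remove)
  have "0 < (\<Sum>j\<in>S. t j)" using split rest t_nonneg[OF S(3)] by linarith
  moreover have "t i \<le> (\<Sum>j\<in>S. t j) / 2" using split rest t_i by linarith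
  ultimately show ?thesis
    using t_nonneg[OF S(3)] unfolding t_def[symmetric] by (simp add: pos_divide_le_eq)
qed

lemma valid_orderD:
  "valid_order nbo \<Longrightarrow> simple_graph G \<Longrightarrow> v \<in> verts G
    \<Longrightarrow> distinct (nbo G L v i) \<and> set (nbo G L v i) = nbrs G v"
  unfolding valid_order_def by blast

lemma P_notin: "i \<notin> L v \<Longrightarrow> P D nbo G L v i = 0"
  by (cases D) simp_all

lemma P_Suc_deg1_in_half:
  assumes vo: "valid_order nbo" and R: "reachable G L v" and i: "i \<in> L v" and d: "deg G v = 1"
    and IH: "\<And>L' w j. reachable (del G v) L' w \<Longrightarrow> P D nbo (del G v) L' w j \<in> {0..1/2}"
  shows "P (Suc D) nbo G L v i \<in> {0..1/2}"
proof -
  define N where "N = nbo G L v i"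
  have N: "distinct N" "set N = nbrs G v"
    using valid_orderD[OF vo] R unfolding reachable_def N_def by auto
  then have "length N = 1" using d unfolding deg_def by (metis distinct_card)
  then have root: "reachable (del G v) L (N ! 0)"
    using reachable_del_remc[OF reachable_imp_admissible[OF R] N(1), of v 0 0] N(2) by simp
  define x where "x j = P D nbo (del G v) L (N ! 0) j" for j
  have x_bounds: "x j \<in> {0..1/2}" for j unfolding x_def by (rule IH[OF root])
  have "card (L v) = 3 \<or> card (L v) = 4"
    using R d reachable_card_le_4[OF R] unfolding reachable_def by auto
  then have "P (Suc D) nbo G L v i
      = (if card (L v) = 4 then (1 - x i) / 3 else (1 - x i) / (2 + x (the_elem (colors - L v))))"
    using i d by (auto simp: Let_def N_def x_def)
  then show ?thesis using x_bounds[of i] x_bounds[of "the_elem (colors - L v)"] by (simp add: field_simps)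
qed

lemma reachable_deg2_lists: "reachable G L v \<Longrightarrow> deg G v = 2 \<Longrightarrow> L v = colors"
  using card_subset_eq[of colors "L v"] reachable_card_le_4[of G L v] card_colors
  unfolding reachable_def by (simp add: colors_def)

lemma prod_one_minus_P_nonneg:
  assumes vo: "valid_order nbo" and adm: "admissible G L" and u: "u \<in> verts G"
    and IH: "\<And>G L v j. reachable G L v \<Longrightarrow> P D nbo G L v j \<in> {0..1/2}"
  shows "0 \<le> (\<Prod>k<length (nbo G L u i).
                  1 - P D nbo (del G u) (remc L (nbo G L u i) k w) (nbo G L u i ! k) w)"
proof (intro prod_nonneg)
  let ?U = "nbo G L u i"
  have U: "distinct ?U" "set ?U = nbrs G u"
    using valid_orderD[OF vo _ u] adm unfolding admissible_def by auto
  fix k assume "k \<in> {..<length ?U}"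
  then have "reachable (del G u) (remc L ?U k w) (?U ! k)"
    using reachable_del_remc[OF adm U(1)] U(2) by simp
  from IH[OF this, of w] show "0 \<le> 1 - P D nbo (del G u) (remc L ?U k w) (?U ! k) w" by simp
qed

lemma P_Suc_deg2_in_half:
  assumes vo: "valid_order nbo" and R: "reachable G L v" and i: "i \<in> L v" and d: "deg G v = 2"
    and IH: "\<And>G L v j. reachable G L v \<Longrightarrow> P D nbo G L v j \<in> {0..1/2}"
  shows "P (Suc D) nbo G L v i \<in> {0..1/2}"
proof -
  define N where "N = nbo G L v i"
  define ok where "ok = (deg G (N ! 0) \<ge> deg G (N ! 1) \<and> (deg G (N ! 0) = 1 \<and> deg G (N ! 1) = 1
    \<longrightarrow> (i \<notin> L (N ! 0) \<longrightarrow> i \<notin> L (N ! 1))))"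
  define v1 where "v1 = (if ok then N ! 0 else N ! 1)"
  define v2 where "v2 = (if ok then N ! 1 else N ! 0)"
  define U where "U = nbo (del G v) L v1 i"
  define pr where "pr w = (\<Prod>k<length U. 1 - P D nbo (del (del G v) v1) (remc L U k w) (U ! k) w)" for w
  define f where "f j = (if j \<notin> L v1 then 0 else pr j / (\<Sum>w\<in>L v1. pr w))" for j
  define y where "y j = P D nbo (del G v) (remc L [v1, v2] 1 j) v2 j" for j
  have branch: "(i \<notin> L v) = False" "(deg G v = 0) = False" "(deg G v = 1) = False"
    "(deg G v = 2) = True"
    using i d by simp_all
  have P_eq: "P (Suc D) nbo G L v i = (1 - f i) * (1 - y i) / (\<Sum>j\<in>L v. (1 - f j) * (1 - y j))"
    unfolding P.simps(2) branch if_False if_True Let_def f_def y_def pr_def U_def v1_def v2_def ok_def N_def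
    by (rule refl)
  have adm: "admissible G L" using R by (rule reachable_imp_admissible)
  have s: "simple_graph G" "v \<in> verts G" using R unfolding reachable_def by auto
  have Lv: "L v = colors" using R d by (rule reachable_deg2_lists)
  have N: "distinct N" "set N = nbrs G v" using valid_orderD[OF vo s] unfolding N_def by auto
  then have "length N = 2" using d unfolding deg_def by (metis distinct_card)
  then have "N ! 0 \<noteq> N ! 1" "N ! 0 \<in> nbrs G v" "N ! 1 \<in> nbrs G v"
    using N nth_mem[of _ N] by (simp_all add: nth_eq_iff_index_eq)
  then have v12: "distinct [v1, v2]" "set [v1, v2] \<subseteq> nbrs G v"
    unfolding v1_def v2_def by (cases ok; simp)+
  have "reachable (del G v) (remc L [v1, v2] 1 j) v2" for j
    using reachable_del_remc[OF adm v12, of 1 j] by simp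
  then have y_bounds: "0 \<le> y j \<and> y j \<le> 1/2" for j unfolding y_def using IH by auto
  have v1: "v1 \<in> verts (del G v)" "L v1 \<subseteq> colors"
    using v12(2) nbrs_subset_verts[OF s(1)] adm unfolding admissible_def by auto
  have pr_nonneg: "0 \<le> pr w" for w
    unfolding pr_def U_def by (rule prod_one_minus_P_nonneg[OF vo admissible_del[OF adm] v1(1) IH])
  have "finite (L v1)" using v1(2) unfolding colors_def by (rule finite_subset) simp
  then have f_bounds: "0 \<le> f j \<and> f j \<le> 1" for j
    using normalized_weight_bounds[of "L v1" pr j] pr_nonneg unfolding f_def by blast
  have sum_f: "sum f colors \<le> 1"
    unfolding f_def by (rule sum_normalized_weights_le_1) (simp add: colors_def, rule v1(2))
  show ?thesis
    unfolding P_eq Lv using weighted_ratio_le_half[of colors i f y] i Lv f_bounds sum_f y_bounds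
    by (simp add: card_colors colors_def)
qed

lemma P_in_half:
  assumes vo: "valid_order nbo"
  shows "reachable G L v \<Longrightarrow> P D nbo G L v i \<in> {0..1/2}"
proof (induction D arbitrary: G L v i)
  case 0
  then have "2 \<le> card (L v)" unfolding reachable_def by auto
  then show ?case by (simp add: field_simps)
next
  case (Suc D)
  have deg: "deg G v \<le> 2" "deg G v + 2 \<le> card (L v)" using Suc.prems unfolding reachable_def by auto
  show ?case
  proof (cases "i \<in> L v")
    case False
    then show ?thesis by (simp add: P_notin)
  next
    case True
    consider "deg G v = 0" | "deg G v = 1" | "deg G v = 2" using deg(1) by linarith
    then show ?thesis
    proof cases
      case 1
      then show ?thesis using True deg(2) by (simp add: field_simps)
    next
      case 2
      then show ?thesis using P_Suc_deg1_in_half[OF vo Suc.prems True] Suc.IH by blast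
    next
      case 3
      then show ?thesis using P_Suc_deg2_in_half[OF vo Suc.prems True] Suc.IH by blast
    qed
  qed
qed

theorem proposition7:
  fixes G :: "'a graph" and L :: "'a \<Rightarrow> nat set" and v :: 'a and i :: nat and D :: nat
    and nbo :: "'a graph \<Rightarrow> ('a \<Rightarrow> nat set) \<Rightarrow> 'a \<Rightarrow> nat \<Rightarrow> 'a list"
  assumes "valid_order nbo"
    and "reachable G L v"
    and "i \<in> colors"
  shows "0 \<le> P D nbo G L v i \<and> P D nbo G L v i \<le> 1 / 2"
  using P_in_half[OF assms(1,2)] by simp

end
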